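(* Let $F$ be a field and let $A$ be a unital alternative $F$-algebra. If $A$ is finite-dimensional or reversible, then $A$ is von-Neumann finite.
   Context: An $F$-algebra is a vector space $A$ over $F$ with a bilinear multiplication $A\times A\to A$, not necessarily associative; unital means there is $1\in A$ with $1a=a1=a$ for all $a$. $A$ is alternative if $a^2b=a(ab)$ and $ab^2=(ab)b$ for all $a,b\in A$. $A$ is von-Neumann finite if for all $a,b\in A$, $ab=1$ implies $ba=1$. $A$ is reversible if for all $a,b\in A$, $ab=0$ implies $ba=0$. *)

theory Defs
  imports Complex_Main
begin

definition f_algebra :: "('f::field \<Rightarrow> 'a::ab_group_add \<Rightarrow> 'a) \<Rightarrow> ('a \<Rightarrow> 'a \<Rightarrow> 'a) \<Rightarrow> bool" where
  "f_algebra scale mult \<longleftrightarrow> vector_space scale \<and>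
     (\<forall>x. Vector_Spaces.linear scale scale (mult x)) \<and>
     (\<forall>y. Vector_Spaces.linear scale scale (\<lambda>x. mult x y))"

definition unit_elem :: "('a \<Rightarrow> 'a \<Rightarrow> 'a) \<Rightarrow> 'a \<Rightarrow> bool" where
  "unit_elem mult e \<longleftrightarrow> (\<forall>a. mult e a = a \<and> mult a e = a)"

definition alternative :: "('a \<Rightarrow> 'a \<Rightarrow> 'a) \<Rightarrow> bool" where
  "alternative mult \<longleftrightarrow>
     (\<forall>a b. mult (mult a a) b = mult a (mult a b) \<and> mult a (mult b b) = mult (mult a b) b)"

definition finite_dimensional :: "('f::field \<Rightarrow> 'a::ab_group_add \<Rightarrow> 'a) \<Rightarrow> bool" where
  "finite_dimensional scale \<longleftrightarrow> (\<exists>B. finite B \<and> module.span scale B = UNIV)"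

definition von_neumann_finite :: "('a \<Rightarrow> 'a \<Rightarrow> 'a) \<Rightarrow> 'a \<Rightarrow> bool" where
  "von_neumann_finite mult e \<longleftrightarrow> (\<forall>a b. mult a b = e \<longrightarrow> mult b a = e)"

definition reversible :: "('a::zero \<Rightarrow> 'a \<Rightarrow> 'a) \<Rightarrow> bool" where
  "reversible mult \<longleftrightarrow> (\<forall>a b. mult a b = 0 \<longrightarrow> mult b a = 0)"

end

theory Submission
  imports Defs
begin

text \<open>In an alternative algebra the associator (x,y,z) = (xy)z - x(yz) is alternating, and the
  Teichmueller identity then yields (zx,x,y) = x(z,x,y). Now let ab = 1. The subspace
  W = {z. (za)b = z} = {z. (z,a,b) = 0} contains 1, is mapped into itself by right multiplication
  with a (by the identity above), and on W this map has the left inverse "right multiplication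
  by b". In finite dimension it is therefore onto W, so 1 = za with z in W, whence z = (za)b = b.
  In the reversible case put f = 1 - ba: alternativity gives af = 0 and fb = 0, reversibility
  fa = 0, and then f = -(f,a,b) = (a,f,b) = 0.\<close>

locale alternative_ring =
  fixes mult :: "'a::ab_group_add \<Rightarrow> 'a \<Rightarrow> 'a" (infixl \<open>\<star>\<close> 70)
  assumes add_mult: "(x + y) \<star> z = x \<star> z + y \<star> z"
    and mult_add: "z \<star> (x + y) = z \<star> x + z \<star> y"
    and left_alternative: "(x \<star> x) \<star> y = x \<star> (x \<star> y)"
    and right_alternative: "x \<star> (y \<star> y) = (x \<star> y) \<star> y"
begin

lemma zero_mult [simp]: "0 \<star> x = 0"
  using add_mult[of 0 0 x] by simp

lemma mult_zero [simp]: "x \<star> 0 = 0"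
  using mult_add[of x 0 0] by simp

lemma minus_mult: "(- x) \<star> z = - (x \<star> z)"
  using minus_unique[of "x \<star> z"] add_mult[of x "- x" z] by simp

lemma mult_minus: "z \<star> (- x) = - (z \<star> x)"
  using minus_unique[of "z \<star> x"] mult_add[of z x "- x"] by simp

lemma diff_mult: "(x - y) \<star> z = x \<star> z - y \<star> z"
  using add_mult[of x "- y" z] by (simp add: minus_mult)

lemma mult_diff: "z \<star> (x - y) = z \<star> x - z \<star> y"
  using mult_add[of z x "- y"] by (simp add: mult_minus)

lemmas mult_distribs = add_mult mult_add minus_mult mult_minus diff_mult mult_diff

definition assoc :: "'a \<Rightarrow> 'a \<Rightarrow> 'a \<Rightarrow> 'a" where
  "assoc x y z = (x \<star> y) \<star> z - x \<star> (y \<star> z)"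

lemma assoc_same_12 [simp]: "assoc x x z = 0"
  by (simp add: assoc_def left_alternative)

lemma assoc_same_23 [simp]: "assoc x z z = 0"
  by (simp add: assoc_def right_alternative)

lemma assoc_swap_12: "assoc y x z = - assoc x y z"
proof -
  have "assoc x y z + assoc y x z = assoc (x + y) (x + y) z"
    unfolding assoc_def by (simp add: mult_distribs left_alternative algebra_simps)
  then show ?thesis
    using minus_unique[of "assoc x y z" "assoc y x z"] by simp
qed

lemma assoc_swap_23: "assoc x z y = - assoc x y z"
proof -
  have "assoc x y z + assoc x z y = assoc x (y + z) (y + z)"
    unfolding assoc_def by (simp add: mult_distribs right_alternative algebra_simps)
  then show ?thesis
    using minus_unique[of "assoc x y z" "assoc x z y"] by simp
qed

lemma assoc_cycle: "assoc y z x = assoc x y z"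
  using assoc_swap_12[of z y x] assoc_swap_23[of y x z] assoc_swap_12[of x y z]
    assoc_swap_23[of x z y] by simp

lemma teichmueller:
  "assoc (w \<star> x) y z - assoc w (x \<star> y) z + assoc w x (y \<star> z)
     = w \<star> assoc x y z + assoc w x y \<star> z"
  by (simp add: assoc_def mult_distribs algebra_simps)

lemma assoc_mult_right_same: "assoc (z \<star> x) x y = x \<star> assoc z x y"
proof -
  have "assoc (x \<star> x) y z - assoc x (x \<star> y) z = x \<star> assoc x y z"
    using teichmueller[of x x y z] by simp
  moreover have "assoc (z \<star> x) x y - assoc z (x \<star> x) y + assoc z x (x \<star> y) = 0"
    using teichmueller[of z x x y] by simp
  moreover have "assoc z (x \<star> x) y = assoc (x \<star> x) y z"
    and "assoc z x (x \<star> y) = assoc x (x \<star> y) z"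
    and "assoc x y z = assoc z x y"
    by (rule assoc_cycle[symmetric])+ (rule assoc_cycle)
  ultimately show ?thesis
    by (simp add: algebra_simps)
qed

end

locale unital_alternative_ring = alternative_ring +
  fixes one :: 'a
  assumes one_mult [simp]: "one \<star> x = x"
    and mult_one [simp]: "x \<star> one = x"
begin

lemma assoc_right_inverse_eq_0_iff:
  assumes "a \<star> b = one"
  shows "assoc z a b = 0 \<longleftrightarrow> (z \<star> a) \<star> b = z"
  by (simp add: assoc_def assms)

lemma left_inverse_if_reversible:
  assumes rev: "reversible mult" and ab: "a \<star> b = one"
  shows "b \<star> a = one"
proof -
  define f where "f = one - b \<star> a"
  have "assoc a b a = 0"
    using assoc_swap_12[of b a a] by simp
  then have af: "a \<star> f = 0"
    by (simp add: f_def mult_diff assoc_def ab)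
  then have fa: "f \<star> a = 0"
    using rev by (simp add: reversible_def)
  have "assoc b a b = 0"
    using assoc_swap_12[of a b b] by simp
  then have fb: "f \<star> b = 0"
    by (simp add: f_def diff_mult assoc_def ab)
  have "assoc f a b = - assoc a f b"
    by (rule assoc_swap_12)
  also have "\<dots> = 0"
    by (simp add: assoc_def af fb)
  finally have "f = 0"
    by (simp add: assoc_def fa ab)
  then show ?thesis
    by (simp add: f_def)
qed

end

lemma f_algebra_alternative_ring:
  fixes scale :: "'f::field \<Rightarrow> 'a::ab_group_add \<Rightarrow> 'a"
  assumes "f_algebra scale mult" and "alternative mult"
  shows "alternative_ring mult"
proof
  fix x y z
  have left: "module_hom scale scale (mult z)" and right: "module_hom scale scale (\<lambda>x. mult x z)"
    using assms(1) by (auto simp: f_algebra_def module_hom_iff_linear)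
  show "mult (x + y) z = mult x z + mult y z"
    using module_hom.add[OF right] .
  show "mult z (x + y) = mult z x + mult z y"
    using module_hom.add[OF left] .
  show "mult (mult x x) y = mult x (mult x y)" and "mult x (mult y y) = mult (mult x y) y"
    using assms(2) by (auto simp: alternative_def)
qed

lemma (in vector_space) finite_dimensional_has_basis:
  assumes "finite_dimensional scale"
  obtains B where "finite_dimensional_vector_space scale B"
proof -
  obtain S where S: "finite S" "span S = UNIV"
    using assms by (auto simp: finite_dimensional_def)
  obtain B where B: "B \<subseteq> S" "independent B" "S \<subseteq> span B"
    by (rule maximal_independent_subset)
  have "span B = UNIV"
    using S(2) span_mono[OF B(3)] by (auto simp: span_span)
  with B S(1) have "finite_dimensional_vector_space scale B"
    by unfold_locales (auto intro: finite_subset)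
  then show ?thesis
    by (rule that)
qed

lemma (in finite_dimensional_vector_space) linear_inj_on_invariant_subspace_image_eq:
  assumes lin: "Vector_Spaces.linear scale scale f" and W: "subspace W"
    and into: "f ` W \<subseteq> W" and inj: "inj_on f W"
  shows "f ` W = W"
proof -
  interpret pair: finite_dimensional_vector_space_pair_1 scale Basis scale
    by unfold_locales
  have "subspace (f ` W)"
    using W lin by (simp add: module_hom.subspace_image module_hom_iff_linear)
  moreover have "dim (f ` W) = dim W"
    using pair.dim_image_eq[OF lin, of W] inj W by (metis span_eq_iff)
  ultimately show ?thesis
    using subspace_dim_equal[OF _ W into] by simp
qed

lemma (in unital_alternative_ring) left_inverse_if_finite_dimensional:
  fixes scale :: "'f::field \<Rightarrow> 'a \<Rightarrow> 'a"
  assumes alg: "f_algebra scale mult" and fd: "finite_dimensional scale"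
    and ab: "a \<star> b = one"
  shows "b \<star> a = one"
proof -
  interpret vector_space scale
    using alg by (simp add: f_algebra_def)
  obtain B where "finite_dimensional_vector_space scale B"
    using fd by (rule finite_dimensional_has_basis)
  then interpret fdv: finite_dimensional_vector_space scale B .
  have hom_a: "module_hom scale scale (\<lambda>z. z \<star> a)"
    and hom_b: "module_hom scale scale (\<lambda>z. z \<star> b)"
    using alg by (simp_all add: f_algebra_def module_hom_iff_linear)
  define W where "W = {z. (z \<star> a) \<star> b = z}"
  have "subspace W"
    by (auto simp: W_def subspace_def add_mult module_hom.scale[OF hom_a] module_hom.scale[OF hom_b])
  moreover have "(\<lambda>z. z \<star> a) ` W \<subseteq> W"
    using assoc_mult_right_same[of _ a b] by (auto simp: W_def assoc_right_inverse_eq_0_iff[OF ab, symmetric])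
  moreover have "inj_on (\<lambda>z. z \<star> a) W"
    by (rule inj_on_inverseI[where g = "\<lambda>z. z \<star> b"]) (simp add: W_def)
  ultimately have onto: "(\<lambda>z. z \<star> a) ` W = W"
    using hom_a by (simp add: fdv.linear_inj_on_invariant_subspace_image_eq module_hom_iff_linear)
  have "one \<in> W"
    by (simp add: W_def ab)
  then obtain z where "z \<in> W" and za: "z \<star> a = one"
    using onto by (metis imageE)
  then have "z = b"
    by (simp add: W_def)
  with za show ?thesis
    by simp
qed

theorem proposition4p1:
  fixes scale :: "'f::field \<Rightarrow> 'a::ab_group_add \<Rightarrow> 'a"
    and mult :: "'a \<Rightarrow> 'a \<Rightarrow> 'a"
    and one :: 'a
  assumes "f_algebra scale mult"
    and "unit_elem mult one"
    and "alternative mult"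
    and "finite_dimensional scale \<or> reversible mult"
  shows "von_neumann_finite mult one"
proof -
  interpret unital_alternative_ring mult one
    using f_algebra_alternative_ring[OF assms(1,3)] assms(2)
    by (simp add: unital_alternative_ring_def unital_alternative_ring_axioms_def unit_elem_def)
  show ?thesis
    using assms(4) left_inverse_if_finite_dimensional[OF assms(1)] left_inverse_if_reversible
    unfolding von_neumann_finite_def by blast
qed

end
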